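(* Consider the Gaussian channel with ISI and colored noise defined in the context, whose noise covariance matrices $\boldsymbol{\Sigma}$ satisfy $\sigma_{\min}(\boldsymbol{\Sigma})\in\Omega(n^{-\mu})$ and $\sigma_{\max}(\boldsymbol{\Sigma})\in\mathcal{O}(n^{\mu/2})$ for some $\mu\in[0,1/2)$, and with $K=K(n,\kappa)=n^{\kappa}$ taps for some $\kappa\in[0,1)$. Suppose $R$ is an achievable identification rate, and let $\{(\mathbb{C}^{(n)},\mathcal{D}^{(n)})\}_{n\in\mathbb{N}}$ be a sequence of $(n,M(n,R),K(n,\kappa),e_1^{(n)},e_2^{(n)})$-DI codes with $e_1^{(n)}\to 0$ and $e_2^{(n)}\to 0$ as $n\to\infty$. Fix constants $a>0$ and $b>0$ (with $b$ arbitrarily small), and set $\epsilon_n' = a/\bar n^{2(1+(\mu/2)+b)}$. Then for sufficiently large $n$, any two distinct convoluted codewords satisfy $$\|\mathbf{H}\mathbf{c}_{i_1}-\mathbf{H}\mathbf{c}_{i_2}\| \ge \sqrt{\bar n\,\epsilon_n'} \quad\text{for all } i_1\neq i_2 \in\{1,\dots,M\}.$$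
   Context: Channel model: for codeword length $n$, let $K\ge 1$ be the number of ISI taps and $\bar n=n+K-1$. The channel impulse response is a real sequence $(h_k)_{k=0}^{K-1}$ with $h_0h_{K-1}\ne 0$, $h_k=0$ for $k<0$ or $k\ge K$, and $\mathbf{H}\in\mathbb{R}^{\bar n\times n}$ is the Toeplitz convolution matrix $[h_{i-j}]$; the vector $\mathbf{H}\mathbf{c}_i$ (with entries $\sum_{k=0}^{K-1}h_kc_{i,t-k}$, $c_{i,t}=0$ for $t\le 0$) is the convoluted codeword. Output: $\mathbf{Y}=\mathbf{H}\mathbf{x}+\mathbf{Z}$ with $\mathbf{Z}\sim\mathcal{N}(\mathbf{0},\boldsymbol{\Sigma})$, $\boldsymbol{\Sigma}\in\mathbb{R}^{\bar n\times\bar n}$ symmetric positive definite, noise density $f_{\mathbf{Z}}$. An $(n,M,K,e_1,e_2)$-DI code under peak power $P_{\max}>0$ consists of codewords $\mathbf{c}_1,\dots,\mathbf{c}_M\in\mathbb{R}^n$ with $|c_{i,t}|\le P_{\max}$ and decoding sets $\mathbb{D}_i\subset\mathbb{R}^{\bar n}$ with $1-\int_{\mathbb{D}_i}f_{\mathbf{Z}}(\mathbf{y}-\mathbf{H}\mathbf{c}_i)d\mathbf{y}\le e_1$ for all $i$ and $\int_{\mathbb{D}_j}f_{\mathbf{Z}}(\mathbf{y}-\mathbf{H}\mathbf{c}_i)d\mathbf{y}\le e_2$ for all $i\ne j$. A rate $R$ is achievable if for every $e_1,e_2>0$ and large $n$ such a code exists with $M=2^{(n\log n)R}$. *)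

theory Defs
  imports "HOL-Probability.Probability" "HOL-Combinatorics.Permutations"
          "HOL-Library.Landau_Symbols"
begin

text \<open>Vectors of length m are functions nat => real (only indices < m matter);
  m x m matrices are functions nat => nat => real (only indices < m matter).\<close>

definition nbar :: "nat \<Rightarrow> nat \<Rightarrow> nat" where
  "nbar n K = n + K - 1"

text \<open>Convolution (H c)_t = sum_{k<K} h_k c_{t-k}, 0-based time index t < n + K - 1,
  codeword entries c_s for s < n, zero otherwise.\<close>
definition conv :: "(nat \<Rightarrow> real) \<Rightarrow> nat \<Rightarrow> nat \<Rightarrow> (nat \<Rightarrow> real) \<Rightarrow> nat \<Rightarrow> real" where
  "conv h K n c t = (\<Sum>k<K. if k \<le> t \<and> t - k < n then h k * c (t - k) else 0)"

definition mat_det :: "nat \<Rightarrow> (nat \<Rightarrow> nat \<Rightarrow> real) \<Rightarrow> real" where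
  "mat_det m S = (\<Sum>p | p permutes {..<m}. of_int (sign p) * (\<Prod>i<m. S i (p i)))"

definition mat_inv :: "nat \<Rightarrow> (nat \<Rightarrow> nat \<Rightarrow> real) \<Rightarrow> (nat \<Rightarrow> nat \<Rightarrow> real)" where
  "mat_inv m S = (SOME B. \<forall>i<m. \<forall>j<m. (\<Sum>k<m. S i k * B k j) = (if i = j then 1 else 0))"

definition sym_pos_def :: "nat \<Rightarrow> (nat \<Rightarrow> nat \<Rightarrow> real) \<Rightarrow> bool" where
  "sym_pos_def m S \<longleftrightarrow> (\<forall>i<m. \<forall>j<m. S i j = S j i) \<and>
     (\<forall>x. (\<exists>i<m. x i \<noteq> 0) \<longrightarrow> (\<Sum>i<m. \<Sum>j<m. x i * S i j * x j) > 0)"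

definition sv_max :: "nat \<Rightarrow> (nat \<Rightarrow> nat \<Rightarrow> real) \<Rightarrow> real" where
  "sv_max m S = (SUP x\<in>{x. (\<Sum>i<m. (x i)\<^sup>2) = 1}. sqrt (\<Sum>i<m. (\<Sum>j<m. S i j * x j)\<^sup>2))"

definition sv_min :: "nat \<Rightarrow> (nat \<Rightarrow> nat \<Rightarrow> real) \<Rightarrow> real" where
  "sv_min m S = (INF x\<in>{x. (\<Sum>i<m. (x i)\<^sup>2) = 1}. sqrt (\<Sum>i<m. (\<Sum>j<m. S i j * x j)\<^sup>2))"

definition gauss_density :: "nat \<Rightarrow> (nat \<Rightarrow> nat \<Rightarrow> real) \<Rightarrow> (nat \<Rightarrow> real) \<Rightarrow> real" where
  "gauss_density m S z = (2 * pi) powr (- real m / 2) * (mat_det m S) powr (-1/2) *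
     exp (- (1/2) * (\<Sum>i<m. \<Sum>j<m. z i * mat_inv m S i j * z j))"

abbreviation leb :: "nat \<Rightarrow> (nat \<Rightarrow> real) measure" where
  "leb m \<equiv> PiM {..<m} (\<lambda>_. lborel)"

definition out_prob :: "nat \<Rightarrow> nat \<Rightarrow> (nat \<Rightarrow> real) \<Rightarrow> (nat \<Rightarrow> nat \<Rightarrow> real)
    \<Rightarrow> (nat \<Rightarrow> real) \<Rightarrow> (nat \<Rightarrow> real) set \<Rightarrow> real" where
  "out_prob n K h S c D = enn2real (\<integral>\<^sup>+ y\<in>D. ennreal (gauss_density (nbar n K) S
       (\<lambda>t. y t - conv h K n c t)) \<partial>leb (nbar n K))"

definition is_DI_code :: "nat \<Rightarrow> nat \<Rightarrow> nat \<Rightarrow> (nat \<Rightarrow> real) \<Rightarrow> (nat \<Rightarrow> nat \<Rightarrow> real)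
    \<Rightarrow> real \<Rightarrow> real \<Rightarrow> real \<Rightarrow> (nat \<Rightarrow> nat \<Rightarrow> real) \<Rightarrow> (nat \<Rightarrow> (nat \<Rightarrow> real) set) \<Rightarrow> bool" where
  "is_DI_code n M K h S Pmax e1 e2 c D \<longleftrightarrow>
     (\<forall>i<M. \<forall>t<n. \<bar>c i t\<bar> \<le> Pmax) \<and>
     (\<forall>i<M. D i \<in> sets (leb (nbar n K))) \<and>
     (\<forall>i<M. 1 - out_prob n K h S (c i) (D i) \<le> e1) \<and>
     (\<forall>i<M. \<forall>j<M. i \<noteq> j \<longrightarrow> out_prob n K h S (c i) (D j) \<le> e2)"

definition num_msgs :: "nat \<Rightarrow> real \<Rightarrow> nat" where
  "num_msgs n R = nat \<lfloor>2 powr (real n * log 2 (real n) * R)\<rfloor>"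

definition achievable :: "(nat \<Rightarrow> nat) \<Rightarrow> (nat \<Rightarrow> nat \<Rightarrow> real) \<Rightarrow> (nat \<Rightarrow> nat \<Rightarrow> nat \<Rightarrow> real)
    \<Rightarrow> real \<Rightarrow> real \<Rightarrow> bool" where
  "achievable K h S Pmax R \<longleftrightarrow>
     (\<forall>e1>0. \<forall>e2>0. \<forall>\<^sub>F n in sequentially. \<exists>c D.
        is_DI_code n (num_msgs n R) (K n) (h n) (S n) Pmax e1 e2 c D)"

end

theory Submission
  imports Defs "Jordan_Normal_Form.Determinant"
begin

(* If the decoding set D of message i has probability at least 1 - e1 under the output
   density f(y - u), u = H c_i, but at most e2 under f(y - v), v = H c_j, then the two Gaussians
   must be far apart. For Gaussians with a common covariance one has
   f(y - u)^2 = f(y - v) f(y - (2u - v)) exp Q(v - u), where Q is the quadratic form of the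
   inverse covariance, so by AM-GM 2 f(y - u) <= f(y - v) + exp Q(v - u) f(y - (2u - v)).
   Integrating over D gives 2 (1 - e1) <= e2 + exp Q(v - u), hence Q(v - u) > 1/4 once the
   error probabilities are small, while Q(v - u) <= |v - u|^2 / sigma_min. As sigma_min is of
   order at least n^-mu and nbar * eps'_n = O(n^-(1 + mu + 2b)), the convoluted codewords are
   eventually at distance at least sqrt (nbar * eps'_n).
   That the density f integrates to 1 is shown by induction on the dimension, integrating out
   the last coordinate after completing the square; the Schur complement of the last pivot
   carries both the quadratic form and the determinant. *)

definition mat_of_fun :: "nat \<Rightarrow> (nat \<Rightarrow> nat \<Rightarrow> real) \<Rightarrow> real mat" where
  "mat_of_fun m P = mat m m (\<lambda>(i, j). P i j)"

lemma mat_of_fun_carrier [simp]: "mat_of_fun m P \<in> carrier_mat m m"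
  by (simp add: mat_of_fun_def)

lemma dim_mat_of_fun [simp]: "dim_row (mat_of_fun m P) = m" "dim_col (mat_of_fun m P) = m"
  by (simp_all add: mat_of_fun_def)

lemma index_mat_of_fun [simp]: "i < m \<Longrightarrow> j < m \<Longrightarrow> mat_of_fun m P $$ (i, j) = P i j"
  by (simp add: mat_of_fun_def)

lemma index_mult_mat_of_fun:
  "i < m \<Longrightarrow> j < m \<Longrightarrow> (mat_of_fun m P * mat_of_fun m Q) $$ (i, j) = (\<Sum>k<m. P i k * Q k j)"
  by (simp add: scalar_prod_def atLeast0LessThan)

lemma mat_det_eq_det: "mat_det m P = det (mat_of_fun m P)"
  unfolding mat_det_def det_def'[OF mat_of_fun_carrier] atLeast0LessThan
proof (rule sum.cong)
  fix p assume "p \<in> {p. p permutes {..<m}}"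
  then have "(\<Prod>i<m. P i (p i)) = (\<Prod>i<m. mat_of_fun m P $$ (i, p i))"
    using permutes_in_image by (intro prod.cong) fastforce+
  then show "of_int (sign p) * (\<Prod>i<m. P i (p i)) = of_int (sign p) * (\<Prod>i<m. mat_of_fun m P $$ (i, p i))"
    by simp
qed simp

definition schur_compl :: "nat \<Rightarrow> (nat \<Rightarrow> nat \<Rightarrow> real) \<Rightarrow> nat \<Rightarrow> nat \<Rightarrow> real" where
  "schur_compl m P i j = P i j - P i m * P m j / P m m"

definition schur_elim :: "nat \<Rightarrow> (nat \<Rightarrow> nat \<Rightarrow> real) \<Rightarrow> real mat" where
  "schur_elim m P = mat_of_fun (Suc m) (\<lambda>i j. if i = j then 1 else if j = m then - P i m / P m m else 0)"

lemma index_schur_elim_mult: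
  assumes i: "i < Suc m" and j: "j < Suc m"
  shows "(schur_elim m P * mat_of_fun (Suc m) P) $$ (i, j) = (if i = m then P m j else schur_compl m P i j)"
proof (cases "i = m")
  case True
  then show ?thesis
    unfolding schur_elim_def index_mult_mat_of_fun[OF i j] by (simp add: if_distrib cong: if_cong)
next
  case False
  have "(schur_elim m P * mat_of_fun (Suc m) P) $$ (i, j)
      = (\<Sum>k<Suc m. (if k = i then P k j else 0) + (if k = m then - P i m / P m m * P k j else 0))"
    unfolding schur_elim_def index_mult_mat_of_fun[OF i j] using False by (intro sum.cong) auto
  also have "\<dots> = schur_compl m P i j"
    using i False by (simp add: sum.distrib schur_compl_def)
  finally show ?thesis
    using False by simp
qed

lemma mat_det_Suc_schur_compl:
  assumes pivot: "P m m \<noteq> 0"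
  shows "mat_det (Suc m) P = P m m * mat_det m (schur_compl m P)"
proof -
  define B where "B = schur_elim m P * mat_of_fun (Suc m) P"
  have B: "B \<in> carrier_mat (Suc m) (Suc m)"
    unfolding B_def schur_elim_def by (rule mult_carrier_mat[OF mat_of_fun_carrier mat_of_fun_carrier])
  have B_index: "i < Suc m \<Longrightarrow> j < Suc m \<Longrightarrow> B $$ (i, j) = (if i = m then P m j else schur_compl m P i j)"
    for i j unfolding B_def by (rule index_schur_elim_mult)
  have "upper_triangular (schur_elim m P)"
    unfolding upper_triangular_def schur_elim_def by auto
  then have "det (schur_elim m P) = 1"
    by (subst det_upper_triangular[of _ "Suc m"]) (auto simp: schur_elim_def prod_list_diag_prod)
  then have "mat_det (Suc m) P = det B"
    by (simp add: B_def schur_elim_def det_mult[of _ "Suc m"] mat_det_eq_det)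
  also have "\<dots> = (\<Sum>i<Suc m. B $$ (i, m) * cofactor B i m)"
    by (rule laplace_expansion_column[OF B]) simp
  also have "\<dots> = P m m * cofactor B m m"
    using pivot by (simp add: B_index schur_compl_def)
  also have "cofactor B m m = det (mat_of_fun m (schur_compl m P))"
    using B by (auto simp: cofactor_def mat_delete_def B_index intro!: arg_cong[where f = det] eq_matI)
  finally show ?thesis
    by (simp add: mat_det_eq_det)
qed

definition quad_form :: "nat \<Rightarrow> (nat \<Rightarrow> nat \<Rightarrow> real) \<Rightarrow> (nat \<Rightarrow> real) \<Rightarrow> real" where
  "quad_form m P z = (\<Sum>i<m. \<Sum>j<m. z i * P i j * z j)"

lemma quad_form_cong: "(\<And>i. i < m \<Longrightarrow> z i = z' i) \<Longrightarrow> quad_form m P z = quad_form m P z'"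
  unfolding quad_form_def by (intro sum.cong) auto

lemma quad_form_polar:
  "2 * quad_form m P a - quad_form m P b
     = quad_form m P (\<lambda>i. 2 * a i - b i) - 2 * quad_form m P (\<lambda>i. a i - b i)"
  unfolding quad_form_def by (simp add: sum_subtractf[symmetric] sum_distrib_left algebra_simps)

lemma quad_form_Suc:
  assumes sym: "\<And>i. i < m \<Longrightarrow> P i m = P m i"
  shows "quad_form (Suc m) P z
           = quad_form m P z + 2 * z m * (\<Sum>i<m. P m i * z i) + P m m * (z m)\<^sup>2"
proof -
  have "(\<Sum>i<m. z i * P i m * z m) = z m * (\<Sum>i<m. P m i * z i)"
    unfolding sum_distrib_left using sym by (intro sum.cong) auto
  moreover have "(\<Sum>j<m. z m * P m j * z j) = z m * (\<Sum>i<m. P m i * z i)"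
    unfolding sum_distrib_left by (simp add: mult.assoc)
  ultimately show ?thesis
    by (simp add: quad_form_def sum.distrib power2_eq_square)
qed

lemma quad_form_schur_compl:
  assumes sym: "\<And>i. i < m \<Longrightarrow> P i m = P m i"
  shows "quad_form m (schur_compl m P) z = quad_form m P z - (\<Sum>i<m. P m i * z i)\<^sup>2 / P m m"
proof -
  have "(\<Sum>i<m. P m i * z i)\<^sup>2 / P m m = (\<Sum>i<m. \<Sum>j<m. z i * (P i m * P m j / P m m) * z j)"
    unfolding power2_eq_square sum_product sum_divide_distrib using sym
    by (intro sum.cong refl) (simp add: mult_ac)
  then show ?thesis
    by (simp add: quad_form_def schur_compl_def algebra_simps sum_subtractf)
qed

lemma quad_form_Suc_complete_square:
  assumes sym: "\<And>i. i < m \<Longrightarrow> P i m = P m i" and pivot: "P m m \<noteq> 0"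
  shows "quad_form (Suc m) P z
           = P m m * (z m + (\<Sum>i<m. P m i * z i) / P m m)\<^sup>2 + quad_form m (schur_compl m P) z"
proof -
  have "quad_form (Suc m) P z = quad_form m P z + 2 * z m * (\<Sum>i<m. P m i * z i) + P m m * (z m)\<^sup>2"
    using sym by (rule quad_form_Suc)
  moreover have "quad_form m P z = quad_form m (schur_compl m P) z + (\<Sum>i<m. P m i * z i)\<^sup>2 / P m m"
    using quad_form_schur_compl[of m P z] sym by simp
  ultimately show ?thesis
    using pivot by (simp add: field_simps power2_eq_square)
qed

lemma sym_pos_def_iff:
  "sym_pos_def m P \<longleftrightarrow>
     (\<forall>i<m. \<forall>j<m. P i j = P j i) \<and> (\<forall>x. (\<exists>i<m. x i \<noteq> 0) \<longrightarrow> quad_form m P x > 0)"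
  by (simp add: sym_pos_def_def quad_form_def)

lemma sym_pos_def_last_diag_pos:
  assumes "sym_pos_def (Suc m) P"
  shows "P m m > 0"
proof -
  define x where "x = (\<lambda>i::nat. if i = m then 1 else (0::real))"
  have "quad_form (Suc m) P x > 0"
    using assms unfolding sym_pos_def_iff x_def by auto
  moreover have "quad_form (Suc m) P x = P m m"
    by (simp add: quad_form_def x_def if_distrib cong: if_cong)
  ultimately show ?thesis
    by simp
qed

lemma sym_pos_def_schur_compl:
  assumes spd: "sym_pos_def (Suc m) P"
  shows "sym_pos_def m (schur_compl m P)"
  unfolding sym_pos_def_iff
proof (intro conjI allI impI)
  have sym: "\<And>i j. i < Suc m \<Longrightarrow> j < Suc m \<Longrightarrow> P i j = P j i"
    using spd unfolding sym_pos_def_iff by blast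
  then show "schur_compl m P i j = schur_compl m P j i" if "i < m" "j < m" for i j
    using that by (simp add: schur_compl_def)
  fix x :: "nat \<Rightarrow> real"
  assume "\<exists>i<m. x i \<noteq> 0"
  define t where "t = - (\<Sum>i<m. P m i * x i) / P m m"
  have "\<exists>i<Suc m. (x(m := t)) i \<noteq> 0"
    using \<open>\<exists>i<m. x i \<noteq> 0\<close> by auto
  then have "quad_form (Suc m) P (x(m := t)) > 0"
    using spd unfolding sym_pos_def_iff by blast
  also have "\<dots> = quad_form m (schur_compl m P) (x(m := t))"
    using sym_pos_def_last_diag_pos[OF spd] sym by (simp add: quad_form_Suc_complete_square t_def)
  also have "\<dots> = quad_form m (schur_compl m P) x"
    by (rule quad_form_cong) simp
  finally show "quad_form m (schur_compl m P) x > 0" .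
qed

lemma mat_det_pos: "sym_pos_def m P \<Longrightarrow> mat_det m P > 0"
proof (induction m arbitrary: P)
  case 0
  then show ?case
    by (simp add: mat_det_def)
next
  case (Suc m)
  then show ?case
    using Suc.IH[OF sym_pos_def_schur_compl[OF Suc.prems]] sym_pos_def_last_diag_pos[OF Suc.prems]
    by (simp add: mat_det_Suc_schur_compl)
qed

lemma nn_integral_exp_neg_square:
  assumes "p > 0"
  shows "(\<integral>\<^sup>+ t. ennreal (exp (- (p * (t - c)\<^sup>2) / 2)) \<partial>lborel) = ennreal (sqrt (2 * pi / p))"
proof -
  define \<sigma> where "\<sigma> = 1 / sqrt p"
  have \<sigma>: "\<sigma> > 0" "\<sigma>\<^sup>2 = 1 / p"
    using assms by (simp_all add: \<sigma>_def power_divide)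
  have "exp (- (p * (t - c)\<^sup>2) / 2) = sqrt (2 * pi / p) * normal_density c \<sigma> t" for t
    unfolding normal_density_def \<sigma>(2) using assms by (simp add: field_simps real_sqrt_divide)
  then have "(\<integral>\<^sup>+ t. ennreal (exp (- (p * (t - c)\<^sup>2) / 2)) \<partial>lborel)
      = (\<integral>\<^sup>+ t. ennreal (sqrt (2 * pi / p)) * ennreal (normal_density c \<sigma> t) \<partial>lborel)"
    using assms by (simp add: ennreal_mult normal_density_nonneg)
  also have "\<dots> = ennreal (sqrt (2 * pi / p)) * (\<integral>\<^sup>+ t. ennreal (normal_density c \<sigma> t) \<partial>lborel)"
    by (rule nn_integral_cmult) simp
  also have "(\<integral>\<^sup>+ t. ennreal (normal_density c \<sigma> t) \<partial>lborel) = 1"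
    using \<sigma>(1) by (subst nn_integral_eq_integral)
      (auto simp: integrable_normal_density integral_normal_density)
  finally show ?thesis
    by simp
qed

lemma borel_measurable_quad_form_diff:
  assumes "{..<m} \<subseteq> I"
  shows "(\<lambda>z. quad_form m P (\<lambda>i. z i - w i)) \<in> borel_measurable (PiM I (\<lambda>_. lborel))"
  unfolding quad_form_def using assms by (intro borel_measurable_sum borel_measurable_times) auto

lemma nn_integral_gaussian_last_coord:
  assumes spd: "sym_pos_def (Suc m) P"
  shows "(\<integral>\<^sup>+ t. ennreal (exp (- quad_form (Suc m) P (\<lambda>i. (x(m := t)) i - w i) / 2)) \<partial>lborel)
           = ennreal (sqrt (2 * pi / P m m))
               * ennreal (exp (- quad_form m (schur_compl m P) (\<lambda>i. x i - w i) / 2))"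
proof -
  have pivot: "P m m > 0"
    using spd by (rule sym_pos_def_last_diag_pos)
  have sym: "\<And>i. i < m \<Longrightarrow> P i m = P m i"
    using spd unfolding sym_pos_def_iff by simp
  define c where "c = w m - (\<Sum>i<m. P m i * (x i - w i)) / P m m"
  define q where "q = quad_form m (schur_compl m P) (\<lambda>i. x i - w i)"
  have "quad_form (Suc m) P (\<lambda>i. (x(m := t)) i - w i) = P m m * (t - c)\<^sup>2 + q" for t
  proof -
    have "quad_form m (schur_compl m P) (\<lambda>i. (x(m := t)) i - w i) = q"
      unfolding q_def by (rule quad_form_cong) simp
    moreover have "(\<Sum>i<m. P m i * ((x(m := t)) i - w i)) = (\<Sum>i<m. P m i * (x i - w i))"
      by (rule sum.cong) simp_all
    ultimately show ?thesis
      using sym pivot by (simp add: quad_form_Suc_complete_square c_def algebra_simps)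
  qed
  then have "(\<integral>\<^sup>+ t. ennreal (exp (- quad_form (Suc m) P (\<lambda>i. (x(m := t)) i - w i) / 2)) \<partial>lborel)
      = (\<integral>\<^sup>+ t. ennreal (exp (- (P m m * (t - c)\<^sup>2) / 2)) * ennreal (exp (- q / 2)) \<partial>lborel)"
    by (simp add: ennreal_mult[symmetric] exp_add[symmetric] field_simps)
  also have "\<dots> = ennreal (sqrt (2 * pi / P m m)) * ennreal (exp (- q / 2))"
    using nn_integral_exp_neg_square[OF pivot, of c] by (subst nn_integral_multc) simp_all
  finally show ?thesis
    unfolding q_def .
qed

lemma nn_integral_gaussian:
  assumes "sym_pos_def m P"
  shows "(\<integral>\<^sup>+ z. ennreal (exp (- quad_form m P (\<lambda>i. z i - w i) / 2)) \<partial>leb m)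
           = ennreal ((2 * pi) powr (real m / 2) / sqrt (mat_det m P))"
  using assms
proof (induction m arbitrary: P)
  case 0
  then show ?case
    by (simp add: quad_form_def mat_det_def PiM_empty)
next
  case (Suc m)
  interpret product_sigma_finite "\<lambda>_. lborel :: real measure"
    by standard
  have pivot: "P m m > 0" and det: "mat_det m (schur_compl m P) > 0"
    using Suc.prems by (auto intro: sym_pos_def_last_diag_pos mat_det_pos sym_pos_def_schur_compl)
  have [measurable]:
    "(\<lambda>z. quad_form (Suc m) P (\<lambda>i. z i - w i)) \<in> borel_measurable (PiM (insert m {..<m}) (\<lambda>_. lborel))"
    "(\<lambda>z. quad_form m (schur_compl m P) (\<lambda>i. z i - w i)) \<in> borel_measurable (leb m)"
    by (auto intro: borel_measurable_quad_form_diff)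
  have "(\<integral>\<^sup>+ z. ennreal (exp (- quad_form (Suc m) P (\<lambda>i. z i - w i) / 2)) \<partial>leb (Suc m))
      = (\<integral>\<^sup>+ x. \<integral>\<^sup>+ t. ennreal (exp (- quad_form (Suc m) P (\<lambda>i. (x(m := t)) i - w i) / 2))
            \<partial>lborel \<partial>leb m)"
    unfolding lessThan_Suc by (rule product_nn_integral_insert) auto
  also have "\<dots> = (\<integral>\<^sup>+ x. ennreal (sqrt (2 * pi / P m m))
      * ennreal (exp (- quad_form m (schur_compl m P) (\<lambda>i. x i - w i) / 2)) \<partial>leb m)"
    by (intro nn_integral_cong) (rule nn_integral_gaussian_last_coord[OF Suc.prems])
  also have "\<dots> = ennreal (sqrt (2 * pi / P m m))
      * ennreal ((2 * pi) powr (real m / 2) / sqrt (mat_det m (schur_compl m P)))"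
    using Suc.IH[OF sym_pos_def_schur_compl[OF Suc.prems]] by (subst nn_integral_cmult) auto
  also have "\<dots> = ennreal ((2 * pi) powr (real (Suc m) / 2) / sqrt (mat_det (Suc m) P))"
    using pivot det
    by (simp add: ennreal_mult[symmetric] mat_det_Suc_schur_compl powr_add add_divide_distrib
        powr_half_sqrt real_sqrt_divide real_sqrt_mult)
  finally show ?case .
qed

lemma mat_inv_right_inverse:
  assumes "sym_pos_def m S" and "i < m" and "j < m"
  shows "(\<Sum>k<m. S i k * mat_inv m S k j) = (if i = j then 1 else 0)"
proof -
  define A where "A = mat_of_fun m S"
  have A: "A \<in> carrier_mat m m"
    by (simp add: A_def)
  have det: "det A \<noteq> 0"
    using mat_det_pos[OF assms(1)] by (simp add: A_def mat_det_eq_det)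
  have "\<forall>i<m. \<forall>j<m. (\<Sum>k<m. S i k * (adj_mat A $$ (k, j) / det A)) = (if i = j then 1 else 0)"
  proof (intro allI impI)
    fix i j
    assume ij: "i < m" "j < m"
    have "(\<Sum>k<m. S i k * adj_mat A $$ (k, j)) = (A * adj_mat A) $$ (i, j)"
      using ij adj_mat(1)[OF A] by (simp add: A_def scalar_prod_def atLeast0LessThan)
    also have "\<dots> = (if i = j then det A else 0)"
      unfolding adj_mat(2)[OF A] using ij by simp
    finally show "(\<Sum>k<m. S i k * (adj_mat A $$ (k, j) / det A)) = (if i = j then 1 else 0)"
      using det by (simp add: sum_divide_distrib[symmetric])
  qed
  then have "\<forall>i<m. \<forall>j<m. (\<Sum>k<m. S i k * mat_inv m S k j) = (if i = j then 1 else 0)"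
    unfolding mat_inv_def by (rule someI[where x = "\<lambda>k j. adj_mat A $$ (k, j) / det A"])
  with assms show ?thesis
    by blast
qed

lemma mat_of_fun_mult_mat_inv:
  "sym_pos_def m S \<Longrightarrow> mat_of_fun m S * mat_of_fun m (mat_inv m S) = 1\<^sub>m m"
  by (rule eq_matI) (auto simp: index_mult_mat_of_fun mat_inv_right_inverse simp del: index_mult_mat(1))

lemma mat_det_mat_inv:
  assumes "sym_pos_def m S"
  shows "mat_det m (mat_inv m S) = 1 / mat_det m S"
proof -
  have "mat_det m S * mat_det m (mat_inv m S) = 1"
    using arg_cong[OF mat_of_fun_mult_mat_inv[OF assms], of det]
    by (simp add: mat_det_eq_det det_mult[of _ m])
  then show ?thesis
    using mat_det_pos[OF assms] by (simp add: field_simps)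
qed

lemma mat_inv_sym:
  assumes spd: "sym_pos_def m S" and "i < m" and "j < m"
  shows "mat_inv m S i j = mat_inv m S j i"
proof -
  define A where "A = mat_of_fun m S"
  define B where "B = mat_of_fun m (mat_inv m S)"
  have A: "A \<in> carrier_mat m m" and B: "B \<in> carrier_mat m m" and Bt: "B\<^sup>T \<in> carrier_mat m m"
    by (simp_all add: A_def B_def)
  have AB: "A * B = 1\<^sub>m m"
    unfolding A_def B_def using spd by (rule mat_of_fun_mult_mat_inv)
  have "A\<^sup>T = A"
    using spd by (auto simp: A_def sym_pos_def_iff intro!: eq_matI)
  then have "B\<^sup>T * A = 1\<^sub>m m"
    using transpose_mult[OF A B] AB by simp
  then have "B\<^sup>T = B"
    using assoc_mult_mat[OF Bt A B] AB Bt B by simp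
  then show ?thesis
    using assms by (metis B_def dim_mat_of_fun index_mat_of_fun index_transpose_mat(1))
qed

lemma sum_mult_mat_inv_apply:
  assumes "sym_pos_def m S" and "i < m"
  shows "(\<Sum>k<m. S i k * (\<Sum>j<m. mat_inv m S k j * d j)) = d i"
proof -
  have "(\<Sum>k<m. S i k * (\<Sum>j<m. mat_inv m S k j * d j)) = (\<Sum>j<m. (\<Sum>k<m. S i k * mat_inv m S k j) * d j)"
    unfolding sum_distrib_left sum_distrib_right by (subst sum.swap) (simp add: mult.assoc)
  also have "\<dots> = (\<Sum>j<m. if i = j then d j else 0)"
    using assms by (intro sum.cong) (simp_all add: mat_inv_right_inverse)
  also have "\<dots> = d i"
    using assms by simp
  finally show ?thesis .
qed

lemma sym_pos_def_mat_inv: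
  assumes spd: "sym_pos_def m S"
  shows "sym_pos_def m (mat_inv m S)"
  unfolding sym_pos_def_iff
proof (intro conjI allI impI)
  show "mat_inv m S i j = mat_inv m S j i" if "i < m" "j < m" for i j
    using spd that by (rule mat_inv_sym)
  fix x :: "nat \<Rightarrow> real"
  assume x: "\<exists>i<m. x i \<noteq> 0"
  define y where "y k = (\<Sum>j<m. mat_inv m S k j * x j)" for k
  have Sy: "(\<Sum>k<m. S i k * y k) = x i" if "i < m" for i
    unfolding y_def using spd that by (rule sum_mult_mat_inv_apply)
  have "\<exists>k<m. y k \<noteq> 0"
  proof (rule ccontr)
    assume "\<not> (\<exists>k<m. y k \<noteq> 0)"
    then have "x i = 0" if "i < m" for i
      using Sy[OF that] by (metis (no_types, lifting) mult_zero_right sum.neutral lessThan_iff)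
    then show False
      using x by blast
  qed
  then have "quad_form m S y > 0"
    using spd unfolding sym_pos_def_iff by blast
  also have "quad_form m S y = (\<Sum>i<m. y i * x i)"
    unfolding quad_form_def using Sy
    by (simp add: mult.assoc sum_distrib_left[symmetric])
  also have "\<dots> = quad_form m (mat_inv m S) x"
    unfolding quad_form_def y_def sum_distrib_left sum_distrib_right
    by (subst sum.swap) (simp add: mult_ac mat_inv_sym[OF spd])
  finally show "quad_form m (mat_inv m S) x > 0" .
qed

lemma gauss_density_quad_form:
  "gauss_density m S z
     = (2 * pi) powr (- real m / 2) * mat_det m S powr (-1/2) * exp (- quad_form m (mat_inv m S) z / 2)"
  unfolding gauss_density_def quad_form_def by simp

lemma borel_measurable_gauss_density [measurable]:
  "(\<lambda>y. gauss_density m S (\<lambda>t. y t - w t)) \<in> borel_measurable (leb m)"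
proof -
  have [measurable]: "(\<lambda>y. quad_form m (mat_inv m S) (\<lambda>t. y t - w t)) \<in> borel_measurable (leb m)"
    by (rule borel_measurable_quad_form_diff) simp
  show ?thesis
    unfolding gauss_density_quad_form by measurable
qed

lemma nn_integral_gauss_density:
  assumes spd: "sym_pos_def m S"
  shows "(\<integral>\<^sup>+ y. ennreal (gauss_density m S (\<lambda>t. y t - w t)) \<partial>leb m) = 1"
proof -
  define C where "C = (2 * pi) powr (- real m / 2) * mat_det m S powr (-1/2)"
  have det: "mat_det m S > 0"
    using spd by (rule mat_det_pos)
  have [measurable]: "(\<lambda>y. quad_form m (mat_inv m S) (\<lambda>t. y t - w t)) \<in> borel_measurable (leb m)"
    by (rule borel_measurable_quad_form_diff) simp
  have "(\<integral>\<^sup>+ y. ennreal (gauss_density m S (\<lambda>t. y t - w t)) \<partial>leb m)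
      = (\<integral>\<^sup>+ y. ennreal C * ennreal (exp (- quad_form m (mat_inv m S) (\<lambda>t. y t - w t) / 2)) \<partial>leb m)"
    by (simp add: gauss_density_quad_form C_def ennreal_mult)
  also have "\<dots> = ennreal C * ennreal ((2 * pi) powr (real m / 2) / sqrt (mat_det m (mat_inv m S)))"
    using nn_integral_gaussian[OF sym_pos_def_mat_inv[OF spd]] by (subst nn_integral_cmult) auto
  also have "\<dots> = 1"
    using det by (simp add: C_def mat_det_mat_inv[OF spd] ennreal_mult[symmetric] powr_minus_divide
        powr_half_sqrt real_sqrt_divide powr_add[symmetric])
  finally show ?thesis .
qed

lemma gauss_density_sq_shift:
  "(gauss_density m S (\<lambda>t. y t - u t))\<^sup>2
     = gauss_density m S (\<lambda>t. y t - v t)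
       * (exp (quad_form m (mat_inv m S) (\<lambda>t. v t - u t)) * gauss_density m S (\<lambda>t. y t - (2 * u t - v t)))"
proof -
  define Q where "Q = quad_form m (mat_inv m S)"
  have "2 * Q (\<lambda>t. y t - u t) - Q (\<lambda>t. y t - v t) = Q (\<lambda>t. y t - (2 * u t - v t)) - 2 * Q (\<lambda>t. v t - u t)"
    using quad_form_polar[of m "mat_inv m S" "\<lambda>t. y t - u t" "\<lambda>t. y t - v t"]
    by (simp add: Q_def algebra_simps)
  then have "exp (- Q (\<lambda>t. y t - u t) / 2) ^ 2
      = exp (- Q (\<lambda>t. y t - v t) / 2) * (exp (Q (\<lambda>t. v t - u t)) * exp (- Q (\<lambda>t. y t - (2 * u t - v t)) / 2))"
    by (simp add: exp_add[symmetric] exp_double[symmetric] power2_eq_square field_simps)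
  then show ?thesis
    by (simp add: gauss_density_quad_form Q_def power_mult_distrib power2_eq_square mult_ac)
qed

lemma gauss_density_mean_shift_le:
  "2 * gauss_density m S (\<lambda>t. y t - u t)
     \<le> gauss_density m S (\<lambda>t. y t - v t)
       + exp (quad_form m (mat_inv m S) (\<lambda>t. v t - u t)) * gauss_density m S (\<lambda>t. y t - (2 * u t - v t))"
proof -
  have nonneg: "gauss_density m S z \<ge> 0" for z
    by (simp add: gauss_density_def)
  then have "gauss_density m S (\<lambda>t. y t - u t)
      = sqrt (gauss_density m S (\<lambda>t. y t - v t)
          * (exp (quad_form m (mat_inv m S) (\<lambda>t. v t - u t)) * gauss_density m S (\<lambda>t. y t - (2 * u t - v t))))"
    by (simp add: gauss_density_sq_shift[symmetric])
  also have "\<dots> \<le> (gauss_density m S (\<lambda>t. y t - v t)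
      + exp (quad_form m (mat_inv m S) (\<lambda>t. v t - u t)) * gauss_density m S (\<lambda>t. y t - (2 * u t - v t))) / 2"
    using nonneg by (intro arith_geo_mean_sqrt) simp_all
  finally show ?thesis
    by simp
qed

definition gauss_prob :: "nat \<Rightarrow> (nat \<Rightarrow> nat \<Rightarrow> real) \<Rightarrow> (nat \<Rightarrow> real) \<Rightarrow> (nat \<Rightarrow> real) set \<Rightarrow> real" where
  "gauss_prob m S u D = enn2real (\<integral>\<^sup>+ y\<in>D. ennreal (gauss_density m S (\<lambda>t. y t - u t)) \<partial>leb m)"

lemma out_prob_eq_gauss_prob: "out_prob n K h S c D = gauss_prob (nbar n K) S (conv h K n c) D"
  by (simp add: out_prob_def gauss_prob_def)

lemma set_nn_integral_gauss_density_le_1: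
  assumes "sym_pos_def m S"
  shows "(\<integral>\<^sup>+ y\<in>D. ennreal (gauss_density m S (\<lambda>t. y t - u t)) \<partial>leb m) \<le> 1"
proof -
  have "(\<integral>\<^sup>+ y\<in>D. ennreal (gauss_density m S (\<lambda>t. y t - u t)) \<partial>leb m)
      \<le> (\<integral>\<^sup>+ y. ennreal (gauss_density m S (\<lambda>t. y t - u t)) \<partial>leb m)"
    by (intro nn_integral_mono) (simp add: indicator_def)
  also have "\<dots> = 1"
    using assms by (rule nn_integral_gauss_density)
  finally show ?thesis .
qed

lemma ennreal_gauss_prob:
  assumes "sym_pos_def m S"
  shows "ennreal (gauss_prob m S u D) = (\<integral>\<^sup>+ y\<in>D. ennreal (gauss_density m S (\<lambda>t. y t - u t)) \<partial>leb m)"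
  unfolding gauss_prob_def
  by (intro ennreal_enn2real order.strict_trans1[OF set_nn_integral_gauss_density_le_1[OF assms]]) simp

lemma gauss_prob_mean_shift_le:
  assumes spd: "sym_pos_def m S" and D: "D \<in> sets (leb m)"
  shows "2 * gauss_prob m S u D \<le> gauss_prob m S v D + exp (quad_form m (mat_inv m S) (\<lambda>t. v t - u t))"
proof -
  define e where "e = exp (quad_form m (mat_inv m S) (\<lambda>t. v t - u t))"
  define g where "g c y = gauss_density m S (\<lambda>t. y t - c t)" for c y
  define G where "G c y = ennreal (g c y) * indicator D y" for c y
  have [measurable]: "G c \<in> borel_measurable (leb m)" for c
    unfolding G_def g_def using D by measurable
  have nonneg: "g c y \<ge> 0" for c y
    by (simp add: g_def gauss_density_def)
  have "ennreal (2 * gauss_prob m S u D) = 2 * (\<integral>\<^sup>+ y. G u y \<partial>leb m)"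
    using spd by (simp add: ennreal_mult' ennreal_gauss_prob G_def g_def)
  also have "\<dots> = (\<integral>\<^sup>+ y. 2 * G u y \<partial>leb m)"
    by (rule nn_integral_cmult[symmetric]) simp
  also have "\<dots> \<le> (\<integral>\<^sup>+ y. G v y + ennreal e * G (\<lambda>t. 2 * u t - v t) y \<partial>leb m)"
  proof (intro nn_integral_mono)
    fix y
    have "2 * ennreal (g u y) = ennreal (2 * g u y)"
      by (simp add: ennreal_mult')
    also have "\<dots> \<le> ennreal (g v y + e * g (\<lambda>t. 2 * u t - v t) y)"
      unfolding e_def g_def by (intro ennreal_leI gauss_density_mean_shift_le)
    also have "\<dots> = ennreal (g v y) + ennreal e * ennreal (g (\<lambda>t. 2 * u t - v t) y)"
      using nonneg by (simp add: e_def ennreal_plus ennreal_mult)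
    finally show "2 * G u y \<le> G v y + ennreal e * G (\<lambda>t. 2 * u t - v t) y"
      by (cases "y \<in> D") (simp_all add: G_def)
  qed
  also have "\<dots> = (\<integral>\<^sup>+ y. G v y \<partial>leb m) + ennreal e * (\<integral>\<^sup>+ y. G (\<lambda>t. 2 * u t - v t) y \<partial>leb m)"
    by (simp add: nn_integral_add nn_integral_cmult)
  also have "\<dots> \<le> ennreal (gauss_prob m S v D) + ennreal e * 1"
    unfolding G_def g_def ennreal_gauss_prob[OF spd]
    by (intro add_left_mono mult_left_mono set_nn_integral_gauss_density_le_1[OF spd]) simp
  also have "\<dots> = ennreal (gauss_prob m S v D + e)"
    by (simp add: e_def gauss_prob_def ennreal_plus)
  finally have "ennreal (2 * gauss_prob m S u D) \<le> ennreal (gauss_prob m S v D + e)" .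
  then show ?thesis
    by (subst (asm) ennreal_le_iff) (simp_all add: e_def gauss_prob_def)
qed

lemma quad_form_mat_inv_gt_if_distinguishable:
  assumes spd: "sym_pos_def m S" and D: "D \<in> sets (leb m)"
    and u: "1 - e1 \<le> gauss_prob m S u D" and v: "gauss_prob m S v D \<le> e2"
    and err: "2 * e1 + e2 < 1/2"
  shows "quad_form m (mat_inv m S) (\<lambda>t. v t - u t) > 1/4"
proof -
  have "exp (1/4 :: real) \<le> 3/2"
    using exp_bound_lemma[of "1/4 :: real"] by simp
  also have "\<dots> < exp (quad_form m (mat_inv m S) (\<lambda>t. v t - u t))"
    using gauss_prob_mean_shift_le[OF spd D, of u v] u v err by simp
  finally show ?thesis
    by simp
qed

lemma sv_min_nonneg:
  assumes "m \<ge> 1"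
  shows "sv_min m S \<ge> 0"
proof -
  have "(\<Sum>i<m. (if i = 0 then 1 else 0 :: real)\<^sup>2) = (\<Sum>i<m. if i = 0 then 1 else 0)"
    by (intro sum.cong) auto
  then have "(\<lambda>i. if i = 0 then 1 else 0) \<in> {x. (\<Sum>i<m. (x i)\<^sup>2) = (1::real)}"
    using assms by simp
  then show ?thesis
    unfolding sv_min_def by (intro cINF_greatest) (auto simp: sum_nonneg)
qed

lemma sv_min_mult_norm_le:
  "sv_min m S * sqrt (\<Sum>i<m. (x i)\<^sup>2) \<le> sqrt (\<Sum>i<m. (\<Sum>j<m. S i j * x j)\<^sup>2)"
proof (cases "(\<Sum>i<m. (x i)\<^sup>2) = 0")
  case True
  then show ?thesis
    by (simp add: sum_nonneg)
next
  case False
  define r where "r = sqrt (\<Sum>i<m. (x i)\<^sup>2)"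
  have r: "r > 0" "r\<^sup>2 = (\<Sum>i<m. (x i)\<^sup>2)"
    using False by (simp_all add: r_def sum_nonneg order_less_le)
  have "(\<Sum>i<m. (x i / r)\<^sup>2) = 1"
    using r False by (simp add: power_divide sum_divide_distrib[symmetric])
  then have "sv_min m S \<le> sqrt (\<Sum>i<m. (\<Sum>j<m. S i j * (x j / r))\<^sup>2)"
    unfolding sv_min_def by (intro cINF_lower bdd_belowI[where m = 0]) (auto simp: sum_nonneg)
  also have "\<dots> = sqrt (\<Sum>i<m. (\<Sum>j<m. S i j * x j)\<^sup>2) / r"
    using r by (simp add: sum_divide_distrib[symmetric] power_divide real_sqrt_divide r_def)
  finally show ?thesis
    using r by (simp add: r_def[symmetric] pos_le_divide_eq)
qed

lemma quad_form_mat_inv_le: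
  assumes spd: "sym_pos_def m S" and sv: "sv_min m S > 0"
  shows "quad_form m (mat_inv m S) d \<le> (\<Sum>i<m. (d i)\<^sup>2) / sv_min m S"
proof -
  define x where "x k = (\<Sum>j<m. mat_inv m S k j * d j)" for k
  define nd where "nd = sqrt (\<Sum>i<m. (d i)\<^sup>2)"
  define nx where "nx = sqrt (\<Sum>i<m. (x i)\<^sup>2)"
  have "quad_form m (mat_inv m S) d = (\<Sum>i<m. d i * x i)"
    unfolding quad_form_def x_def sum_distrib_left by (simp add: mult.assoc)
  also have "\<dots> \<le> nd * nx"
    unfolding nd_def nx_def real_sqrt_mult[symmetric] by (rule real_le_rsqrt Cauchy_Schwarz_ineq_sum)+
  also have "nx \<le> nd / sv_min m S"
  proof -
    have "sv_min m S * nx \<le> sqrt (\<Sum>i<m. (\<Sum>j<m. S i j * x j)\<^sup>2)"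
      unfolding nx_def by (rule sv_min_mult_norm_le)
    also have "\<dots> = nd"
      unfolding nd_def x_def using spd by (simp add: sum_mult_mat_inv_apply)
    finally show ?thesis
      using sv by (simp add: field_simps)
  qed
  then have "nd * nx \<le> nd * (nd / sv_min m S)"
    by (rule mult_left_mono) (simp add: nd_def sum_nonneg)
  also have "\<dots> = (\<Sum>i<m. (d i)\<^sup>2) / sv_min m S"
    unfolding nd_def times_divide_eq_right[symmetric] by (simp add: sum_nonneg)
  finally show ?thesis .
qed

lemma DI_code_conv_dist_ge:
  assumes code: "is_DI_code n M K h S Pmax e1 e2 c D"
    and spd: "sym_pos_def (nbar n K) S" and err: "2 * e1 + e2 < 1/2"
    and \<epsilon>: "0 \<le> \<epsilon>" "\<epsilon> < sv_min (nbar n K) S / 4"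
  shows "\<forall>i<M. \<forall>j<M. i \<noteq> j \<longrightarrow>
           sqrt (\<Sum>t<nbar n K. (conv h K n (c i) t - conv h K n (c j) t)\<^sup>2) \<ge> sqrt \<epsilon>"
proof (intro allI impI real_sqrt_le_mono)
  fix i j
  assume ij: "i < M" "j < M" "i \<noteq> j"
  define u where "u = conv h K n (c i)"
  define v where "v = conv h K n (c j)"
  have sv: "sv_min (nbar n K) S > 0"
    using \<epsilon> by linarith
  have D: "D i \<in> sets (leb (nbar n K))"
    and u: "1 - e1 \<le> gauss_prob (nbar n K) S u (D i)"
    and v: "gauss_prob (nbar n K) S v (D i) \<le> e2"
    using code ij unfolding is_DI_code_def out_prob_eq_gauss_prob u_def v_def by auto
  have "1/4 < quad_form (nbar n K) (mat_inv (nbar n K) S) (\<lambda>t. v t - u t)"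
    using spd D u v err by (rule quad_form_mat_inv_gt_if_distinguishable)
  also have "\<dots> \<le> (\<Sum>t<nbar n K. (v t - u t)\<^sup>2) / sv_min (nbar n K) S"
    using spd sv by (rule quad_form_mat_inv_le)
  finally have "sv_min (nbar n K) S / 4 < (\<Sum>t<nbar n K. (u t - v t)\<^sup>2)"
    using sv by (simp add: field_simps power2_commute)
  then show "\<epsilon> \<le> (\<Sum>t<nbar n K. (conv h K n (c i) t - conv h K n (c j) t)\<^sup>2)"
    using \<epsilon> by (simp add: u_def v_def)
qed

lemma threshold_lt_quarter:
  fixes n m :: nat and a b \<mu> C \<sigma> :: real
  assumes "1 \<le> n" "n \<le> m" "0 \<le> a" "0 \<le> \<mu>" "0 \<le> b"
    and small: "a * real n powr (- (1 + 2 * b)) < C / 4" and sv: "C * real n powr (- \<mu>) \<le> \<sigma>"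
  shows "real m * (a / real m powr (2 * (1 + \<mu> / 2 + b))) < \<sigma> / 4"
proof -
  define p where "p = 2 * (1 + \<mu> / 2 + b)"
  have "real m > 0"
    using assms by simp
  then have "real m * (a / real m powr p) = a * real m powr (1 - p)"
    by (simp add: powr_diff)
  also have "\<dots> = a * real m powr (- (1 + 2 * b) - \<mu>)"
    by (simp add: p_def algebra_simps)
  also have "\<dots> \<le> a * real n powr (- (1 + 2 * b) - \<mu>)"
    using assms by (intro mult_left_mono powr_mono2') auto
  also have "\<dots> = a * real n powr (- (1 + 2 * b)) * real n powr (- \<mu>)"
    by (simp add: powr_add[symmetric])
  also have "\<dots> < C / 4 * real n powr (- \<mu>)"
    using assms by (intro mult_strict_right_mono) auto
  also have "\<dots> \<le> \<sigma> / 4"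
    using sv by simp
  finally show ?thesis
    by (simp add: p_def)
qed

lemma eventually_threshold_lt_quarter:
  fixes m :: "nat \<Rightarrow> nat" and \<sigma> :: "nat \<Rightarrow> real" and a b \<mu> :: real
  assumes m: "\<forall>\<^sub>F n in sequentially. n \<le> m n"
    and \<sigma>: "\<sigma> \<in> \<Omega>(\<lambda>n. real n powr (- \<mu>))" and \<sigma>_nonneg: "\<forall>\<^sub>F n in sequentially. 0 \<le> \<sigma> n"
    and "0 \<le> a" "0 \<le> \<mu>" "0 < b"
  shows "\<forall>\<^sub>F n in sequentially. real (m n) * (a / real (m n) powr (2 * (1 + \<mu> / 2 + b))) < \<sigma> n / 4"
proof -
  obtain C where "C > 0"
    and \<sigma>_lower: "\<forall>\<^sub>F n in sequentially. norm (\<sigma> n) \<ge> C * norm (real n powr (- \<mu>))"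
    using \<sigma> by (elim landau_omega.bigE) auto
  have "((\<lambda>n. a * real n powr (- (1 + 2 * b))) \<longlongrightarrow> a * 0) sequentially"
    using assms by (intro tendsto_intros tendsto_neg_powr[OF _ filterlim_real_sequentially]) auto
  then have "\<forall>\<^sub>F n in sequentially. a * real n powr (- (1 + 2 * b)) < C / 4"
    using \<open>C > 0\<close> by (intro order_tendstoD(2)) auto
  with m \<sigma>_lower \<sigma>_nonneg eventually_ge_at_top[of 1] show ?thesis
  proof eventually_elim
    case (elim n)
    then show ?case
      using assms by (intro threshold_lt_quarter[where C = C]) auto
  qed
qed

theorem lemma5:
  fixes K :: "nat \<Rightarrow> nat" and h :: "nat \<Rightarrow> nat \<Rightarrow> real"
    and S :: "nat \<Rightarrow> nat \<Rightarrow> nat \<Rightarrow> real"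
    and \<mu> \<kappa> Pmax R a b :: real
    and e1 e2 :: "nat \<Rightarrow> real"
    and c :: "nat \<Rightarrow> nat \<Rightarrow> nat \<Rightarrow> real"
    and D :: "nat \<Rightarrow> nat \<Rightarrow> (nat \<Rightarrow> real) set"
  assumes mu: "0 \<le> \<mu>" "\<mu> < 1/2"
    and kappa: "0 \<le> \<kappa>" "\<kappa> < 1"
    and K: "\<And>n. n \<ge> 1 \<Longrightarrow> K n = nat \<lceil>real n powr \<kappa>\<rceil>"
    and taps: "\<And>n. n \<ge> 1 \<Longrightarrow> h n 0 * h n (K n - 1) \<noteq> 0"
    and Spd: "\<And>n. n \<ge> 1 \<Longrightarrow> sym_pos_def (nbar n (K n)) (S n)"
    and Smin: "(\<lambda>n. sv_min (nbar n (K n)) (S n)) \<in> \<Omega>(\<lambda>n. real n powr (- \<mu>))"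
    and Smax: "(\<lambda>n. sv_max (nbar n (K n)) (S n)) \<in> O(\<lambda>n. real n powr (\<mu> / 2))"
    and Pmax: "Pmax > 0"
    and ach: "achievable K h S Pmax R"
    and codes: "\<And>n. n \<ge> 1 \<Longrightarrow>
        is_DI_code n (num_msgs n R) (K n) (h n) (S n) Pmax (e1 n) (e2 n) (c n) (D n)"
    and e1: "e1 \<longlonglongrightarrow> 0" and e2: "e2 \<longlonglongrightarrow> 0"
    and ab: "a > 0" "b > 0"
  shows "\<forall>\<^sub>F n in sequentially. \<forall>i1<num_msgs n R. \<forall>i2<num_msgs n R. i1 \<noteq> i2 \<longrightarrow>
     sqrt (\<Sum>t<nbar n (K n). (conv (h n) (K n) n (c n i1) t - conv (h n) (K n) n (c n i2) t)\<^sup>2)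
       \<ge> sqrt (real (nbar n (K n)) * (a / real (nbar n (K n)) powr (2 * (1 + \<mu> / 2 + b))))"
proof -
  have nbar: "\<forall>\<^sub>F n in sequentially. n \<le> nbar n (K n)"
    using eventually_ge_at_top[of 1]
  proof eventually_elim
    case (elim n)
    then have "real n powr \<kappa> > 0"
      by simp
    then have "K n \<ge> 1"
      using K[OF elim] by linarith
    then show ?case
      by (simp add: nbar_def)
  qed
  have "\<forall>\<^sub>F n in sequentially. 0 \<le> sv_min (nbar n (K n)) (S n)"
    using nbar eventually_ge_at_top[of 1] by eventually_elim (auto intro: sv_min_nonneg)
  then have threshold: "\<forall>\<^sub>F n in sequentially. real (nbar n (K n))
      * (a / real (nbar n (K n)) powr (2 * (1 + \<mu> / 2 + b))) < sv_min (nbar n (K n)) (S n) / 4"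
    using nbar Smin ab mu by (intro eventually_threshold_lt_quarter) auto
  have "((\<lambda>n. 2 * e1 n + e2 n) \<longlongrightarrow> 2 * 0 + 0) sequentially"
    by (intro tendsto_intros e1 e2)
  then have err: "\<forall>\<^sub>F n in sequentially. 2 * e1 n + e2 n < 1/2"
    by (intro order_tendstoD(2)) auto
  have threshold_nonneg:
    "0 \<le> real (nbar n (K n)) * (a / real (nbar n (K n)) powr (2 * (1 + \<mu> / 2 + b)))" for n
    using ab by simp
  show ?thesis
    using threshold err eventually_ge_at_top[of 1]
    by eventually_elim (rule DI_code_conv_dist_ge[OF codes Spd _ threshold_nonneg]; simp)
qed

end
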